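(* Let $K>1$, $\mathcal{Y}=\{1,\dots,K\}$, and let $(X,Y,M)$ be distributed on $\mathcal{X}\times\mathcal{Y}\times\mathcal{Y}$. Define the asymmetric softmax $\tilde{\bm{\psi}}:\mathbb{R}^{K+1}\to\mathbb{R}^{K+1}$ by $\tilde{\psi}_y(\bm{u})=\exp(u_y)/\sum_{y'=1}^{K}\exp(u_{y'})$ for $1\le y\le K$ and $\tilde{\psi}_{K+1}(\bm{u})=\exp(u_{K+1})/\big(\sum_{y'=1}^{K+1}\exp(u_{y'})-\max_{y'\le K}\exp(u_{y'})\big)$, and the surrogate $$L_{\tilde{\psi}}(\bm{u},y,m)=-\log\tilde{\psi}_y(\bm{u})-[\![m\ne y]\!]\log\big(1-\tilde{\psi}_{K+1}(\bm{u})\big)-[\![m=y]\!]\log\tilde{\psi}_{K+1}(\bm{u}).$$ Let $R_{L_{\tilde{\psi}}}(\bm{g})=\mathbb{E}[L_{\tilde{\psi}}(\bm{g}(X),Y,M)]$ for measurable $\bm{g}:\mathcal{X}\to\mathbb{R}^{K+1}$. Then: (1) (consistency) for every $\bm{g}^*\in\mathop{\rm argmin}_{\bm{g}}R_{L_{\tilde{\psi}}}(\bm{g})$, the decision rule $\varphi\circ\bm{g}^*$ minimizes the 0-1-deferral risk $R^{\bot}_{01}(f)=\mathbb{E}[\ell^{\bot}_{01}(f(X),Y,M)]$ over all $f:\mathcal{X}\to\mathcal{Y}\cup\{\bot\}$; (2) the estimator $\hat{\bm{\eta}}^{\tilde{\psi}}=\tilde{\bm{\psi}}$ satisfies $\tilde{\bm{\psi}}(\bm{g}^*(\bm{x}))=[\bm{\eta}(\bm{x});\Pr(M=Y\mid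 X=\bm{x})]$ for all $\bm{x}\in\mathcal{X}$; (3) any other probability estimator for $L_{\tilde{\psi}}$ is necessarily bounded.
   Context: $\bm{\eta}(\bm{x})=(\Pr(Y=y\mid X=\bm{x}))_{y=1}^K$. The 0-1-deferral loss is $\ell^{\bot}_{01}(f(\bm{x}),y,m)=[\![f(\bm{x})\in\mathcal{Y},\ f(\bm{x})\ne y]\!]+[\![f(\bm{x})=\bot,\ m\ne y]\!]$, where $\bot$ denotes deferral to the expert whose prediction is $M$. The map $\varphi:\mathbb{R}^{K+1}\to\mathcal{Y}\cup\{\bot\}$ is $\varphi(\bm{u})=\bot$ if $u_{K+1}>\max_{y\le K}u_y$ and $\varphi(\bm{u})=\mathop{\rm argmax}_{y\le K}u_y$ otherwise. A probability estimator for a surrogate $L$ is a map $\hat{\bm{\eta}}:\mathbb{R}^{K+1}\to\mathbb{R}^{K+1}$ such that for every distribution and every minimizer $\bm{g}^*$ of the surrogate risk, $\hat{\bm{\eta}}(\bm{g}^*(\bm{x}))=[\bm{\eta}(\bm{x});\Pr(M=Y\mid X=\bm{x})]$. *)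

theory Defs
  imports "HOL-Probability.Probability"
begin

text \<open>Labels are 1..K; score vectors in R^(K+1) are functions nat => real on indices 1..K+1;
  decisions in Y \<union> {deferral} are nat option, with None = deferral.\<close>

definition asym_softmax :: "nat \<Rightarrow> (nat \<Rightarrow> real) \<Rightarrow> nat \<Rightarrow> real" where
  "asym_softmax K u i =
     (if i \<in> {1..K} then exp (u i) / (\<Sum>y'=1..K. exp (u y'))
      else if i = K + 1 then
        exp (u (K+1)) / ((\<Sum>y'=1..K+1. exp (u y')) - Max ((\<lambda>y'. exp (u y')) ` {1..K}))
      else 0)"

definition surr_loss :: "nat \<Rightarrow> (nat \<Rightarrow> real) \<Rightarrow> nat \<Rightarrow> nat \<Rightarrow> real" where
  "surr_loss K u y m =
     - ln (asym_softmax K u y)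
     - of_bool (m \<noteq> y) * ln (1 - asym_softmax K u (K+1))
     - of_bool (m = y) * ln (asym_softmax K u (K+1))"

text \<open>The map phi; ties in the argmax are broken towards the smallest label.\<close>
definition defer_decision :: "nat \<Rightarrow> (nat \<Rightarrow> real) \<Rightarrow> nat option" where
  "defer_decision K u =
     (if u (K+1) > Max (u ` {1..K}) then None
      else Some (LEAST y. y \<in> {1..K} \<and> (\<forall>y'\<in>{1..K}. u y' \<le> u y)))"

definition loss01_defer :: "nat option \<Rightarrow> nat \<Rightarrow> nat \<Rightarrow> real" where
  "loss01_defer f y m = of_bool (f \<noteq> None \<and> f \<noteq> Some y) + of_bool (f = None \<and> m \<noteq> y)"

text \<open>A distribution of (X,Y,M): marginal mu of X and conditional law D x of (Y,M) given X = x.\<close>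
definition valid_dist :: "nat \<Rightarrow> 'x measure \<Rightarrow> ('x \<Rightarrow> (nat \<times> nat) pmf) \<Rightarrow> bool" where
  "valid_dist K \<mu> D \<longleftrightarrow> prob_space \<mu> \<and> (\<forall>x. set_pmf (D x) \<subseteq> {1..K} \<times> {1..K})
     \<and> (\<forall>y m. (\<lambda>x. pmf (D x) (y, m)) \<in> borel_measurable \<mu>)"

definition surr_risk :: "nat \<Rightarrow> 'x measure \<Rightarrow> ('x \<Rightarrow> (nat \<times> nat) pmf) \<Rightarrow> ('x \<Rightarrow> nat \<Rightarrow> real) \<Rightarrow> ennreal" where
  "surr_risk K \<mu> D g =
     (\<integral>\<^sup>+ x. (\<integral>\<^sup>+ ym. ennreal (surr_loss K (g x) (fst ym) (snd ym)) \<partial>measure_pmf (D x)) \<partial>\<mu>)"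

definition risk01 :: "'x measure \<Rightarrow> ('x \<Rightarrow> (nat \<times> nat) pmf) \<Rightarrow> ('x \<Rightarrow> nat option) \<Rightarrow> ennreal" where
  "risk01 \<mu> D f =
     (\<integral>\<^sup>+ x. (\<integral>\<^sup>+ ym. ennreal (loss01_defer (f x) (fst ym) (snd ym)) \<partial>measure_pmf (D x)) \<partial>\<mu>)"

definition meas_score :: "nat \<Rightarrow> 'x measure \<Rightarrow> ('x \<Rightarrow> nat \<Rightarrow> real) \<Rightarrow> bool" where
  "meas_score K \<mu> g \<longleftrightarrow> (\<forall>i\<in>{1..K+1}. (\<lambda>x. g x i) \<in> borel_measurable \<mu>)"

definition surr_minimizer :: "nat \<Rightarrow> 'x measure \<Rightarrow> ('x \<Rightarrow> (nat \<times> nat) pmf) \<Rightarrow> ('x \<Rightarrow> nat \<Rightarrow> real) \<Rightarrow> bool" where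
  "surr_minimizer K \<mu> D g \<longleftrightarrow> meas_score K \<mu> g \<and>
     (\<forall>h. meas_score K \<mu> h \<longrightarrow> surr_risk K \<mu> D g \<le> surr_risk K \<mu> D h)"

definition target :: "nat \<Rightarrow> ('x \<Rightarrow> (nat \<times> nat) pmf) \<Rightarrow> 'x \<Rightarrow> nat \<Rightarrow> real" where
  "target K D x i =
     (if i \<in> {1..K} then measure_pmf.prob (D x) {(y, m). y = i}
      else if i = K + 1 then measure_pmf.prob (D x) {(y, m). m = y}
      else 0)"

definition prob_estimator :: "nat \<Rightarrow> 'x measure \<Rightarrow> ((nat \<Rightarrow> real) \<Rightarrow> nat \<Rightarrow> real) \<Rightarrow> bool" where
  "prob_estimator K \<Omega> est \<longleftrightarrow>
     (\<forall>\<nu> D g. sets \<nu> = sets \<Omega> \<and> valid_dist K \<nu> D \<and> surr_minimizer K \<nu> D g \<longrightarrow>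
        (AE x in \<nu>. \<forall>i\<in>{1..K+1}. est (g x) i = target K D x i))"

end

theory Submission
  imports Defs
begin

(* Given X = x, the conditional surrogate risk is the cross-entropy of the law of Y against the
   first K coordinates of psi plus that of the Bernoulli law of [M = Y] against psi_(K+1). It is
   therefore an entropy term independent of the score plus a sum of generalized Kullback-Leibler
   divergences, which vanishes exactly when psi(g(x)) = [eta(x); Pr(M = Y | X = x)]. A minimizer
   must achieve this almost everywhere: otherwise moving psi(g(x)) halfway towards the target
   halves the divergence and strictly lowers the risk. As phi(u) picks the largest coordinate of
   psi(u), it then picks a decision of least conditional 0-1-deferral risk. Conversely, every
   score u is a minimizer for a conditional law with parameters psi(u), so every probability
   estimator agrees with psi and takes values in [0, 1]. *)

section \<open>The asymmetric softmax\<close>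

lemma Max_lt_sum:
  fixes f :: "'a \<Rightarrow> real"
  assumes "finite A" "a \<in> A" "b \<in> A" "a \<noteq> b" "\<And>x. x \<in> A \<Longrightarrow> 0 < f x"
  shows "Max (f ` A) < sum f A"
proof -
  have "Max (f ` A) \<in> f ` A"
    using assms(1,2) by (intro Max_in) auto
  then obtain c where c: "c \<in> A" "Max (f ` A) = f c"
    by auto
  obtain c' where c': "c' \<in> A" "c' \<noteq> c"
    using assms(2-4) by metis
  have "f c + f c' = sum f {c, c'}"
    using c'(2) by simp
  also have "\<dots> \<le> sum f A"
    using assms(1,5) c c' by (intro sum_mono2) (auto intro: less_imp_le)
  finally show ?thesis
    using c assms(5)[OF c'(1)] by linarith
qed

lemma exp_sum_minus_Max_pos:
  fixes v :: "nat \<Rightarrow> real"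
  assumes "1 < K"
  shows "0 < (\<Sum>y=1..K. exp (v y)) - Max ((\<lambda>y. exp (v y)) ` {1..K})"
  using Max_lt_sum[of "{1..K}" 1 2 "\<lambda>y. exp (v y)"] assms by simp

lemma asym_softmax_last_eq:
  "asym_softmax K v (K+1) =
     exp (v (K+1)) / (exp (v (K+1)) + ((\<Sum>y=1..K. exp (v y)) - Max ((\<lambda>y. exp (v y)) ` {1..K})))"
  unfolding asym_softmax_def by (simp add: add.commute)

lemma asym_softmax_pos: "y \<in> {1..K} \<Longrightarrow> 0 < asym_softmax K v y"
  unfolding asym_softmax_def by (auto intro!: divide_pos_pos sum_pos)

lemma asym_softmax_sum:
  assumes "0 < K"
  shows "(\<Sum>y=1..K. asym_softmax K v y) = 1"
proof -
  have "0 < (\<Sum>y=1..K. exp (v y))"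
    using assms by (intro sum_pos) auto
  then show ?thesis
    by (simp add: asym_softmax_def sum_divide_distrib[symmetric])
qed

lemma asym_softmax_le_1:
  assumes "y \<in> {1..K}"
  shows "asym_softmax K v y \<le> 1"
proof -
  have "asym_softmax K v y \<le> (\<Sum>y=1..K. asym_softmax K v y)"
    using assms by (intro member_le_sum order.strict_implies_order asym_softmax_pos) auto
  then show ?thesis
    using assms asym_softmax_sum[of K v] by simp
qed

lemma asym_softmax_last_pos_less_1:
  assumes "1 < K"
  shows "0 < asym_softmax K v (K+1)" "asym_softmax K v (K+1) < 1"
proof -
  define d where "d = (\<Sum>y=1..K. exp (v y)) - Max ((\<lambda>y. exp (v y)) ` {1..K})"
  have "0 < d" "0 < exp (v (K+1))"
    using exp_sum_minus_Max_pos[OF assms] by (auto simp: d_def)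
  then show "0 < asym_softmax K v (K+1)" "asym_softmax K v (K+1) < 1"
    unfolding asym_softmax_last_eq d_def[symmetric] by (simp_all add: add_pos_pos divide_less_eq_1_pos)
qed

lemma asym_softmax_abs_le_1:
  assumes "1 < K" "i \<in> {1..K+1}"
  shows "\<bar>asym_softmax K u i\<bar> \<le> 1"
proof (cases "i = K + 1")
  case False
  then have "i \<in> {1..K}"
    using assms(2) by auto
  then show ?thesis
    using asym_softmax_pos asym_softmax_le_1 by (simp add: abs_le_iff less_imp_le)
qed (use asym_softmax_last_pos_less_1[OF assms(1), of u] in simp)

(* A right inverse on the open simplex: the first K exponentials sum to 1, so exp of the last
   coordinate e solves e / (e + 1 - max q) = t. *)
definition asym_softmax_inv :: "nat \<Rightarrow> (nat \<Rightarrow> real) \<Rightarrow> real \<Rightarrow> nat \<Rightarrow> real" where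
  "asym_softmax_inv K q t i =
     (if i = K + 1 then ln (t * (1 - Max (q ` {1..K})) / (1 - t)) else ln (q i))"

lemma asym_softmax_asym_softmax_inv:
  assumes K: "1 < K" and q: "\<And>y. y \<in> {1..K} \<Longrightarrow> 0 < q y" "(\<Sum>y=1..K. q y) = 1"
    and t: "0 < t" "t < 1"
  shows "\<forall>y\<in>{1..K}. asym_softmax K (asym_softmax_inv K q t) y = q y"
    and "asym_softmax K (asym_softmax_inv K q t) (K+1) = t"
proof -
  let ?v = "asym_softmax_inv K q t"
  have exp_v: "exp (?v y) = q y" if "y \<in> {1..K}" for y
    using that q(1)[OF that] by (simp add: asym_softmax_inv_def)
  have S: "(\<Sum>y=1..K. exp (?v y)) = 1"
    using q(2) exp_v by simp
  have M: "Max ((\<lambda>y. exp (?v y)) ` {1..K}) = Max (q ` {1..K})"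
    using exp_v by (intro arg_cong[where f = Max] image_cong) auto
  define c where "c = 1 - Max (q ` {1..K})"
  have c: "0 < c"
    using exp_sum_minus_Max_pos[OF K, of ?v] S M by (simp add: c_def)
  show "\<forall>y\<in>{1..K}. asym_softmax K ?v y = q y"
    using exp_v S by (simp add: asym_softmax_def)
  have "exp (?v (K+1)) = t * c / (1 - t)"
    using c t by (simp add: asym_softmax_inv_def c_def)
  then have "asym_softmax K ?v (K+1) = (t * c / (1 - t)) / (t * c / (1 - t) + c)"
    unfolding asym_softmax_last_eq S M c_def[symmetric] by simp
  also have "\<dots> = t"
    using c t by (simp add: field_simps)
  finally show "asym_softmax K ?v (K+1) = t" .
qed

section \<open>The deferral rule\<close>

lemma divide_add_le_divide_add_iff:
  fixes a b d :: real
  assumes "0 < a" "0 < b" "0 < d"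
  shows "a / (a + d) \<le> b / (b + d) \<longleftrightarrow> a \<le> b"
  using assms by (simp add: field_simps)

lemma asym_softmax_le_iff:
  assumes "y \<in> {1..K}" "y' \<in> {1..K}"
  shows "asym_softmax K v y \<le> asym_softmax K v y' \<longleftrightarrow> v y \<le> v y'"
proof -
  have "0 < (\<Sum>y=1..K. exp (v y))"
    using assms by (intro sum_pos) auto
  then show ?thesis
    using assms by (simp add: asym_softmax_def divide_le_cancel)
qed

lemma asym_softmax_last_le_iff:
  assumes K: "1 < K" and y0: "y0 \<in> {1..K}" "\<forall>y\<in>{1..K}. v y \<le> v y0"
  shows "asym_softmax K v (K+1) \<le> asym_softmax K v y0 \<longleftrightarrow> v (K+1) \<le> v y0"
proof -
  define d where "d = (\<Sum>y=1..K. exp (v y)) - Max ((\<lambda>y. exp (v y)) ` {1..K})"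
  have d: "0 < d"
    unfolding d_def by (rule exp_sum_minus_Max_pos[OF K])
  have "Max ((\<lambda>y. exp (v y)) ` {1..K}) = exp (v y0)"
    using y0 by (intro Max_eqI) auto
  then have "asym_softmax K v y0 = exp (v y0) / (exp (v y0) + d)"
    using y0(1) by (simp add: asym_softmax_def d_def)
  moreover have "asym_softmax K v (K+1) = exp (v (K+1)) / (exp (v (K+1)) + d)"
    unfolding asym_softmax_last_eq d_def ..
  ultimately show ?thesis
    using d by (simp add: divide_add_le_divide_add_iff)
qed

lemma defer_decision_cases:
  fixes v :: "nat \<Rightarrow> real"
  assumes "0 < K"
  obtains y0 where "y0 \<in> {1..K}" "\<forall>y\<in>{1..K}. v y \<le> v y0"
      "v y0 < v (K+1)" "defer_decision K v = None"
    | y0 where "y0 \<in> {1..K}" "\<forall>y\<in>{1..K}. v y \<le> v y0"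
      "v (K+1) \<le> v y0" "defer_decision K v = Some y0"
proof -
  define y0 where "y0 = (LEAST y. y \<in> {1..K} \<and> (\<forall>y'\<in>{1..K}. v y' \<le> v y))"
  have "Max (v ` {1..K}) \<in> v ` {1..K}"
    using assms by (intro Max_in) auto
  then obtain y where "y \<in> {1..K}" "v y = Max (v ` {1..K})"
    by auto
  then have "\<exists>y. y \<in> {1..K} \<and> (\<forall>y'\<in>{1..K}. v y' \<le> v y)"
    by (auto intro!: exI[of _ y])
  then have "y0 \<in> {1..K} \<and> (\<forall>y\<in>{1..K}. v y \<le> v y0)"
    unfolding y0_def by (rule LeastI_ex)
  then have y0: "y0 \<in> {1..K}" "\<forall>y\<in>{1..K}. v y \<le> v y0"
    by auto
  then have "Max (v ` {1..K}) = v y0"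
    by (intro Max_eqI) auto
  then have "defer_decision K v = (if v y0 < v (K+1) then None else Some y0)"
    unfolding defer_decision_def y0_def by simp
  then show thesis
    using that y0 by (cases "v y0 < v (K+1)") simp_all
qed

definition decision_index :: "nat \<Rightarrow> nat option \<Rightarrow> nat" where
  "decision_index K d = (case d of None \<Rightarrow> K + 1 | Some y \<Rightarrow> y)"

lemma defer_decision_range:
  "0 < K \<Longrightarrow> defer_decision K v \<in> insert None (Some ` {1..K})"
  by (cases rule: defer_decision_cases[of K v]) simp_all

lemma defer_decision_maximizes:
  assumes K: "1 < K" and d: "d \<in> insert None (Some ` {1..K})"
  shows "asym_softmax K v (decision_index K d)
           \<le> asym_softmax K v (decision_index K (defer_decision K v))"
proof -
  have "0 < K"
    using K by simp
  then show ?thesis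
  proof (cases rule: defer_decision_cases[of K v])
    case (1 y0)
    then have "asym_softmax K v y0 < asym_softmax K v (K+1)"
      using asym_softmax_last_le_iff[OF K, of y0 v] by simp
    moreover have "asym_softmax K v y \<le> asym_softmax K v y0" if "y \<in> {1..K}" for y
      using 1 that asym_softmax_le_iff[of y K y0 v] by simp
    ultimately show ?thesis
      using 1 d by (fastforce simp: decision_index_def)
  next
    case (2 y0)
    then show ?thesis
      using d asym_softmax_last_le_iff[OF K, of y0 v] asym_softmax_le_iff[of _ K y0 v]
      by (auto simp: decision_index_def)
  qed
qed

section \<open>Conditional risks\<close>

definition kl_term :: "real \<Rightarrow> real \<Rightarrow> real" where
  "kl_term a b = a * ln a - a * ln b - a + b"

lemma kl_term_pos_eq: "0 < a \<Longrightarrow> 0 < b \<Longrightarrow> kl_term a b = a * (b / a - 1 - ln (b / a))"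
  by (simp add: kl_term_def ln_div algebra_simps)

lemma kl_term_nonneg:
  assumes "0 \<le> a" "0 < b"
  shows "0 \<le> kl_term a b"
proof (cases "a = 0")
  case False
  then have "0 < a"
    using assms by simp
  then show ?thesis
    using assms ln_le_minus_one[of "b / a"] by (simp add: kl_term_pos_eq)
qed (use assms in \<open>simp add: kl_term_def\<close>)

lemma kl_term_eq_0_iff:
  assumes "0 \<le> a" "0 < b"
  shows "kl_term a b = 0 \<longleftrightarrow> a = b"
proof (cases "a = 0")
  case False
  then have "0 < a"
    using assms by simp
  then have "kl_term a b = 0 \<longleftrightarrow> ln (b / a) = b / a - 1"
    using assms by (auto simp: kl_term_pos_eq)
  also have "\<dots> \<longleftrightarrow> b / a = 1"
    using \<open>0 < a\<close> assms ln_eq_minus_one[of "b / a"] by auto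
  finally show ?thesis
    using \<open>0 < a\<close> by auto
qed (use assms in \<open>simp add: kl_term_def\<close>)

lemma kl_term_midpoint_le:
  assumes "0 \<le> a" "0 < b"
  shows "kl_term a ((a + b) / 2) \<le> kl_term a b / 2"
proof (cases "a = 0")
  case False
  then have a: "0 < a"
    using assms by simp
  have "a * b \<le> ((a + b) / 2)\<^sup>2"
    using sum_squares_ge_zero[of "a - b" 0] by (simp add: power2_eq_square field_simps)
  then have "ln (a * b) \<le> ln (((a + b) / 2)\<^sup>2)"
    using a assms by simp
  then have "ln a + ln b \<le> 2 * ln ((a + b) / 2)"
    using a assms by (simp add: ln_mult ln_realpow)
  then have "a * (ln a + ln b) \<le> a * (2 * ln ((a + b) / 2))"
    using a by (intro mult_left_mono) auto
  then show ?thesis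
    by (simp add: kl_term_def field_simps)
qed (use assms in \<open>simp add: kl_term_def\<close>)

definition label_prob :: "nat \<Rightarrow> (nat \<times> nat) pmf \<Rightarrow> nat \<Rightarrow> real" where
  "label_prob K \<pi> y = (\<Sum>m=1..K. pmf \<pi> (y, m))"

definition agree_prob :: "nat \<Rightarrow> (nat \<times> nat) pmf \<Rightarrow> real" where
  "agree_prob K \<pi> = (\<Sum>y=1..K. pmf \<pi> (y, y))"

lemma measure_pmf_eq_sum_Int:
  assumes "finite S" "set_pmf \<pi> \<subseteq> S"
  shows "measure_pmf.prob \<pi> A = (\<Sum>z\<in>A \<inter> S. pmf \<pi> z)"
proof -
  have "measure_pmf.prob \<pi> A = measure_pmf.prob \<pi> (A \<inter> S)"
    using assms(2) by (intro measure_prob_cong_0) (auto simp: set_pmf_eq)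
  then show ?thesis
    using assms(1) by (simp add: measure_measure_pmf_finite)
qed

lemma sum_pmf_labels:
  fixes \<pi> :: "(nat \<times> nat) pmf"
  assumes "set_pmf \<pi> \<subseteq> {1..K} \<times> {1..K}"
  shows "(\<Sum>y=1..K. \<Sum>m=1..K. pmf \<pi> (y, m)) = 1"
proof -
  have "sum (pmf \<pi>) ({1..K} \<times> {1..K}) = 1"
    using assms by (intro sum_pmf_eq_1) auto
  then show ?thesis
    by (simp add: sum.cartesian_product)
qed

lemma sum_label_prob:
  "set_pmf \<pi> \<subseteq> {1..K} \<times> {1..K} \<Longrightarrow> (\<Sum>y=1..K. label_prob K \<pi> y) = 1"
  unfolding label_prob_def by (rule sum_pmf_labels)

lemma label_prob_nonneg: "0 \<le> label_prob K \<pi> y"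
  unfolding label_prob_def by (simp add: sum_nonneg)

lemma agree_prob_nonneg: "0 \<le> agree_prob K \<pi>"
  unfolding agree_prob_def by (simp add: sum_nonneg)

lemma sum_pmf_agree:
  "(\<Sum>y=1..K. \<Sum>m=1..K. pmf \<pi> (y, m) * of_bool (m = y)) = agree_prob K \<pi>"
  unfolding agree_prob_def by (intro sum.cong refl) (simp add: of_bool_def if_distrib cong: if_cong)

lemma sum_pmf_disagree:
  assumes "set_pmf \<pi> \<subseteq> {1..K} \<times> {1..K}"
  shows "(\<Sum>y=1..K. \<Sum>m=1..K. pmf \<pi> (y, m) * of_bool (m \<noteq> y)) = 1 - agree_prob K \<pi>"
proof -
  have "(\<Sum>y=1..K. \<Sum>m=1..K. pmf \<pi> (y, m) * of_bool (m \<noteq> y))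
      = (\<Sum>y=1..K. \<Sum>m=1..K. pmf \<pi> (y, m) - pmf \<pi> (y, m) * of_bool (m = y))"
    by (intro sum.cong refl) auto
  then show ?thesis
    using sum_pmf_labels[OF assms] sum_pmf_agree by (simp add: sum_subtractf)
qed

lemma agree_prob_le_1:
  assumes "set_pmf \<pi> \<subseteq> {1..K} \<times> {1..K}"
  shows "agree_prob K \<pi> \<le> 1"
proof -
  have "0 \<le> (\<Sum>y=1..K. \<Sum>m=1..K. pmf \<pi> (y, m) * of_bool (m \<noteq> y))"
    by (intro sum_nonneg) auto
  then show ?thesis
    using sum_pmf_disagree[OF assms] by linarith
qed

lemma target_eq_label_prob:
  assumes "set_pmf (D x) \<subseteq> {1..K} \<times> {1..K}" "i \<in> {1..K}"
  shows "target K D x i = label_prob K (D x) i"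
proof -
  have "{(y, m). y = i} \<inter> {1..K} \<times> {1..K} = Pair i ` {1..K}"
    using assms(2) by auto
  then show ?thesis
    using assms measure_pmf_eq_sum_Int[OF _ assms(1), of "{(y, m). y = i}"]
    by (simp add: target_def label_prob_def sum.reindex inj_on_def)
qed

lemma target_last_eq_agree_prob:
  assumes "set_pmf (D x) \<subseteq> {1..K} \<times> {1..K}"
  shows "target K D x (K+1) = agree_prob K (D x)"
proof -
  have "{(y, m). m = y} \<inter> {1..K} \<times> {1..K} = (\<lambda>y. (y, y)) ` {1..K}"
    by auto
  then show ?thesis
    using measure_pmf_eq_sum_Int[OF _ assms, of "{(y, m). m = y}"]
    by (simp add: target_def agree_prob_def sum.reindex inj_on_def)
qed

definition cond_surr_risk :: "nat \<Rightarrow> (nat \<times> nat) pmf \<Rightarrow> (nat \<Rightarrow> real) \<Rightarrow> real" where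
  "cond_surr_risk K \<pi> v = (\<Sum>y=1..K. \<Sum>m=1..K. pmf \<pi> (y, m) * surr_loss K v y m)"

definition surr_entropy :: "nat \<Rightarrow> (nat \<times> nat) pmf \<Rightarrow> real" where
  "surr_entropy K \<pi> =
     (\<Sum>y=1..K. - (label_prob K \<pi> y * ln (label_prob K \<pi> y)))
     - (1 - agree_prob K \<pi>) * ln (1 - agree_prob K \<pi>) - agree_prob K \<pi> * ln (agree_prob K \<pi>)"

definition surr_regret :: "nat \<Rightarrow> (nat \<times> nat) pmf \<Rightarrow> (nat \<Rightarrow> real) \<Rightarrow> real" where
  "surr_regret K \<pi> v =
     (\<Sum>y=1..K. kl_term (label_prob K \<pi> y) (asym_softmax K v y))
     + kl_term (1 - agree_prob K \<pi>) (1 - asym_softmax K v (K+1))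
     + kl_term (agree_prob K \<pi>) (asym_softmax K v (K+1))"

lemma surr_loss_nonneg:
  assumes "1 < K" "y \<in> {1..K}"
  shows "0 \<le> surr_loss K v y m"
proof -
  have "ln (asym_softmax K v y) \<le> 0" "ln (asym_softmax K v (K+1)) \<le> 0"
    "ln (1 - asym_softmax K v (K+1)) \<le> 0"
    using asym_softmax_pos[OF assms(2), of v] asym_softmax_le_1[OF assms(2), of v]
      asym_softmax_last_pos_less_1[OF assms(1), of v] by simp_all
  then show ?thesis
    by (simp add: surr_loss_def)
qed

lemma cond_surr_risk_nonneg: "1 < K \<Longrightarrow> 0 \<le> cond_surr_risk K \<pi> v"
  unfolding cond_surr_risk_def by (intro sum_nonneg mult_nonneg_nonneg surr_loss_nonneg) auto

lemma nn_integral_surr_loss: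
  assumes K: "1 < K" and supp: "set_pmf \<pi> \<subseteq> {1..K} \<times> {1..K}"
  shows "(\<integral>\<^sup>+z. ennreal (surr_loss K v (fst z) (snd z)) \<partial>measure_pmf \<pi>) = ennreal (cond_surr_risk K \<pi> v)"
proof -
  have "(\<integral>\<^sup>+z. ennreal (surr_loss K v (fst z) (snd z)) \<partial>measure_pmf \<pi>)
      = (\<Sum>z\<in>{1..K} \<times> {1..K}. ennreal (surr_loss K v (fst z) (snd z)) * pmf \<pi> z)"
    using supp by (intro nn_integral_measure_pmf_support) auto
  also have "\<dots> = (\<Sum>z\<in>{1..K} \<times> {1..K}. ennreal (pmf \<pi> z * surr_loss K v (fst z) (snd z)))"
    using surr_loss_nonneg[OF K] by (intro sum.cong refl) (auto simp: ennreal_mult mult.commute)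
  also have "\<dots> = ennreal (\<Sum>z\<in>{1..K} \<times> {1..K}. pmf \<pi> z * surr_loss K v (fst z) (snd z))"
    using surr_loss_nonneg[OF K] by (intro sum_ennreal) auto
  finally show ?thesis
    by (simp add: cond_surr_risk_def sum.cartesian_product split_def)
qed

lemma cond_surr_risk_eq_cross_entropy:
  assumes "set_pmf \<pi> \<subseteq> {1..K} \<times> {1..K}"
  shows "cond_surr_risk K \<pi> v =
     (\<Sum>y=1..K. - (label_prob K \<pi> y * ln (asym_softmax K v y)))
     + (1 - agree_prob K \<pi>) * - ln (1 - asym_softmax K v (K+1))
     + agree_prob K \<pi> * - ln (asym_softmax K v (K+1))"
proof -
  let ?s = "asym_softmax K v" and ?r = "asym_softmax K v (K+1)"
  have "cond_surr_risk K \<pi> v =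
     (\<Sum>y=1..K. \<Sum>m=1..K. pmf \<pi> (y, m) * - ln (?s y)
        + pmf \<pi> (y, m) * of_bool (m \<noteq> y) * - ln (1 - ?r)
        + pmf \<pi> (y, m) * of_bool (m = y) * - ln ?r)"
    unfolding cond_surr_risk_def surr_loss_def by (intro sum.cong refl) (simp add: algebra_simps)
  also have "\<dots> =
     (\<Sum>y=1..K. \<Sum>m=1..K. pmf \<pi> (y, m) * - ln (?s y))
     + (\<Sum>y=1..K. \<Sum>m=1..K. pmf \<pi> (y, m) * of_bool (m \<noteq> y)) * - ln (1 - ?r)
     + (\<Sum>y=1..K. \<Sum>m=1..K. pmf \<pi> (y, m) * of_bool (m = y)) * - ln ?r"
    by (simp only: sum.distrib sum_distrib_right)
  also have "\<dots> =
     (\<Sum>y=1..K. - (label_prob K \<pi> y * ln (asym_softmax K v y)))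
     + (1 - agree_prob K \<pi>) * - ln (1 - ?r) + agree_prob K \<pi> * - ln ?r"
    unfolding sum_pmf_disagree[OF assms] sum_pmf_agree
    by (simp add: label_prob_def sum_distrib_right sum_negf)
  finally show ?thesis .
qed

lemma cond_surr_risk_eq:
  assumes K: "1 < K" and supp: "set_pmf \<pi> \<subseteq> {1..K} \<times> {1..K}"
  shows "cond_surr_risk K \<pi> v = surr_entropy K \<pi> + surr_regret K \<pi> v"
proof -
  let ?\<eta> = "label_prob K \<pi>" and ?s = "asym_softmax K v"
  let ?p = "agree_prob K \<pi>" and ?r = "asym_softmax K v (K+1)"
  have "(\<Sum>y=1..K. - (?\<eta> y * ln (?s y)))
      = (\<Sum>y=1..K. - (?\<eta> y * ln (?\<eta> y)) + kl_term (?\<eta> y) (?s y) + (?\<eta> y - ?s y))"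
    by (intro sum.cong refl) (simp add: kl_term_def)
  also have "\<dots> = (\<Sum>y=1..K. - (?\<eta> y * ln (?\<eta> y))) + (\<Sum>y=1..K. kl_term (?\<eta> y) (?s y))
      + ((\<Sum>y=1..K. ?\<eta> y) - (\<Sum>y=1..K. ?s y))"
    by (simp only: sum.distrib sum_subtractf)
  also have "(\<Sum>y=1..K. ?\<eta> y) - (\<Sum>y=1..K. ?s y) = 0"
    using K sum_label_prob[OF supp] asym_softmax_sum[of K v] by simp
  finally have "(\<Sum>y=1..K. - (?\<eta> y * ln (?s y)))
      = (\<Sum>y=1..K. - (?\<eta> y * ln (?\<eta> y))) + (\<Sum>y=1..K. kl_term (?\<eta> y) (?s y))"
    by simp
  moreover have "(1 - ?p) * - ln (1 - ?r) + ?p * - ln ?r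
      = - ((1 - ?p) * ln (1 - ?p)) - ?p * ln ?p + kl_term (1 - ?p) (1 - ?r) + kl_term ?p ?r"
    by (simp add: kl_term_def algebra_simps)
  ultimately show ?thesis
    unfolding cond_surr_risk_eq_cross_entropy[OF supp] surr_entropy_def surr_regret_def
    by linarith
qed

lemma surr_regret_terms_nonneg:
  assumes K: "1 < K" and supp: "set_pmf \<pi> \<subseteq> {1..K} \<times> {1..K}"
  shows "\<forall>y\<in>{1..K}. 0 \<le> kl_term (label_prob K \<pi> y) (asym_softmax K v y)"
    and "0 \<le> kl_term (1 - agree_prob K \<pi>) (1 - asym_softmax K v (K+1))"
    and "0 \<le> kl_term (agree_prob K \<pi>) (asym_softmax K v (K+1))"
  using label_prob_nonneg asym_softmax_pos agree_prob_nonneg agree_prob_le_1[OF supp]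
    asym_softmax_last_pos_less_1[OF K, of v]
  by (auto intro!: kl_term_nonneg)

lemma surr_regret_nonneg:
  "1 < K \<Longrightarrow> set_pmf \<pi> \<subseteq> {1..K} \<times> {1..K} \<Longrightarrow> 0 \<le> surr_regret K \<pi> v"
  unfolding surr_regret_def using surr_regret_terms_nonneg[of K \<pi> v]
  by (intro add_nonneg_nonneg sum_nonneg) auto

lemma surr_regret_eq_0_iff:
  assumes K: "1 < K" and supp: "set_pmf \<pi> \<subseteq> {1..K} \<times> {1..K}"
  shows "surr_regret K \<pi> v = 0 \<longleftrightarrow>
    (\<forall>y\<in>{1..K}. asym_softmax K v y = label_prob K \<pi> y) \<and> asym_softmax K v (K+1) = agree_prob K \<pi>"
proof -
  note nonneg = surr_regret_terms_nonneg[OF K supp, of v]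
  have "0 \<le> (\<Sum>y=1..K. kl_term (label_prob K \<pi> y) (asym_softmax K v y))"
    using nonneg(1) by (intro sum_nonneg) auto
  then have "surr_regret K \<pi> v = 0 \<longleftrightarrow>
      (\<Sum>y=1..K. kl_term (label_prob K \<pi> y) (asym_softmax K v y)) = 0
      \<and> kl_term (1 - agree_prob K \<pi>) (1 - asym_softmax K v (K+1)) = 0
      \<and> kl_term (agree_prob K \<pi>) (asym_softmax K v (K+1)) = 0"
    unfolding surr_regret_def using nonneg(2,3) by linarith
  also have "\<dots> \<longleftrightarrow>
      (\<forall>y\<in>{1..K}. kl_term (label_prob K \<pi> y) (asym_softmax K v y) = 0)
      \<and> kl_term (1 - agree_prob K \<pi>) (1 - asym_softmax K v (K+1)) = 0
      \<and> kl_term (agree_prob K \<pi>) (asym_softmax K v (K+1)) = 0"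
    using sum_nonneg_eq_0_iff[of "{1..K}" "\<lambda>y. kl_term (label_prob K \<pi> y) (asym_softmax K v y)"]
      nonneg(1) by auto
  also have "\<dots> \<longleftrightarrow>
      (\<forall>y\<in>{1..K}. asym_softmax K v y = label_prob K \<pi> y) \<and> asym_softmax K v (K+1) = agree_prob K \<pi>"
    using kl_term_eq_0_iff label_prob_nonneg asym_softmax_pos agree_prob_nonneg
      asym_softmax_last_pos_less_1[OF K, of v] by auto
  finally show ?thesis .
qed

(* The target may lie on the boundary of the simplex, where no score reaches it; the midpoint
   always lies in the range of asym_softmax. *)
lemma surr_regret_halving:
  fixes v :: "nat \<Rightarrow> real"
  assumes K: "1 < K" and supp: "set_pmf \<pi> \<subseteq> {1..K} \<times> {1..K}"
  defines "q \<equiv> \<lambda>y. (label_prob K \<pi> y + asym_softmax K v y) / 2"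
    and "t \<equiv> (agree_prob K \<pi> + asym_softmax K v (K+1)) / 2"
  shows "surr_regret K \<pi> (asym_softmax_inv K q t) \<le> surr_regret K \<pi> v / 2"
proof -
  let ?\<eta> = "label_prob K \<pi>" and ?s = "asym_softmax K v"
  let ?p = "agree_prob K \<pi>" and ?r = "asym_softmax K v (K+1)"
  have r: "0 < ?r" "?r < 1"
    by (rule asym_softmax_last_pos_less_1[OF K])+
  have p: "0 \<le> ?p" "?p \<le> 1"
    using agree_prob_nonneg agree_prob_le_1[OF supp] by auto
  have q: "\<And>y. y \<in> {1..K} \<Longrightarrow> 0 < q y" "(\<Sum>y=1..K. q y) = 1"
    using K asym_softmax_pos[of _ K v] label_prob_nonneg[of K \<pi>]
      sum_label_prob[OF supp] asym_softmax_sum[of K v]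
    by (auto simp: q_def sum.distrib sum_divide_distrib[symmetric] add_nonneg_pos)
  have t: "0 < t" "t < 1"
    using p r by (auto simp: t_def)
  note inv = asym_softmax_asym_softmax_inv[OF K q t]
  let ?h = "asym_softmax_inv K q t"
  have h_first: "asym_softmax K ?h y = (?\<eta> y + ?s y) / 2" if "y \<in> {1..K}" for y
    using inv(1) that unfolding q_def by simp
  have h_last: "asym_softmax K ?h (K+1) = (?p + ?r) / 2"
    using inv(2) unfolding t_def .
  have h_sum: "(\<Sum>y=1..K. kl_term (?\<eta> y) (asym_softmax K ?h y))
      = (\<Sum>y=1..K. kl_term (?\<eta> y) ((?\<eta> y + ?s y) / 2))"
    by (intro sum.cong refl) (simp only: h_first)
  have h_compl: "1 - (?p + ?r) / 2 = (1 - ?p + (1 - ?r)) / 2"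
    by (simp add: field_simps)
  have "surr_regret K \<pi> ?h =
      (\<Sum>y=1..K. kl_term (?\<eta> y) ((?\<eta> y + ?s y) / 2))
      + kl_term (1 - ?p) ((1 - ?p + (1 - ?r)) / 2) + kl_term ?p ((?p + ?r) / 2)"
    unfolding surr_regret_def h_last h_sum h_compl ..
  also have "\<dots> \<le> (\<Sum>y=1..K. kl_term (?\<eta> y) (?s y) / 2)
      + kl_term (1 - ?p) (1 - ?r) / 2 + kl_term ?p ?r / 2"
    using p r label_prob_nonneg asym_softmax_pos
    by (intro add_mono sum_mono kl_term_midpoint_le) auto
  also have "\<dots> = surr_regret K \<pi> v / 2"
    unfolding surr_regret_def sum_divide_distrib[symmetric] by simp
  finally show ?thesis .
qed

section \<open>Minimizers of the surrogate risk\<close>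

lemma measurable_asym_softmax:
  assumes "meas_score K \<mu> g"
  shows "(\<lambda>x. asym_softmax K (g x) i) \<in> borel_measurable \<mu>"
proof -
  have exp_g: "(\<lambda>x. exp (g x j)) \<in> borel_measurable \<mu>" if "j \<in> {1..K+1}" for j
  proof -
    have "(\<lambda>x. g x j) \<in> borel_measurable \<mu>"
      using assms that unfolding meas_score_def by blast
    then show ?thesis
      by measurable
  qed
  have sums: "(\<lambda>x. \<Sum>y=1..K. exp (g x y)) \<in> borel_measurable \<mu>"
    "(\<lambda>x. \<Sum>y=1..K+1. exp (g x y)) \<in> borel_measurable \<mu>"
    "(\<lambda>x. Max ((\<lambda>y. exp (g x y)) ` {1..K})) \<in> borel_measurable \<mu>"
    using exp_g by (auto intro!: borel_measurable_sum borel_measurable_Max)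
  consider "i \<in> {1..K}" | "i = K + 1" | "i \<notin> {1..K+1}"
    by fastforce
  then show ?thesis
  proof cases
    case 1
    then show ?thesis
      using exp_g[of i] sums unfolding asym_softmax_def by (simp add: borel_measurable_divide)
  next
    case 2
    then show ?thesis
      using exp_g[of i] sums unfolding asym_softmax_def
      by (simp add: borel_measurable_divide borel_measurable_diff)
  next
    case 3
    then have "(\<lambda>x. asym_softmax K (g x) i) = (\<lambda>x. 0)"
      by (auto simp: asym_softmax_def)
    then show ?thesis
      by simp
  qed
qed

lemma measurable_pmf_valid_dist:
  "valid_dist K \<mu> D \<Longrightarrow> (\<lambda>x. pmf (D x) z) \<in> borel_measurable \<mu>"
  unfolding valid_dist_def by (cases z) auto

lemma measurable_surr_regret:
  assumes "valid_dist K \<mu> D" "meas_score K \<mu> g"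
  shows "(\<lambda>x. surr_regret K (D x) (g x)) \<in> borel_measurable \<mu>"
  using measurable_pmf_valid_dist[OF assms(1)] measurable_asym_softmax[OF assms(2)]
  unfolding surr_regret_def kl_term_def label_prob_def agree_prob_def by measurable

lemma measurable_cond_surr_risk:
  assumes "valid_dist K \<mu> D" "meas_score K \<mu> g"
  shows "(\<lambda>x. cond_surr_risk K (D x) (g x)) \<in> borel_measurable \<mu>"
  using measurable_pmf_valid_dist[OF assms(1)] measurable_asym_softmax[OF assms(2)]
  unfolding cond_surr_risk_def surr_loss_def by measurable

lemma meas_score_asym_softmax_inv:
  assumes "\<And>y. (\<lambda>x. q x y) \<in> borel_measurable \<mu>" "t \<in> borel_measurable \<mu>"
  shows "meas_score K \<mu> (\<lambda>x. asym_softmax_inv K (q x) (t x))"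
proof -
  have "(\<lambda>x. Max ((\<lambda>y. q x y) ` {1..K})) \<in> borel_measurable \<mu>"
    using assms(1) by (intro borel_measurable_Max) auto
  then show ?thesis
    using assms unfolding meas_score_def asym_softmax_inv_def by auto
qed

lemma surr_risk_eq:
  assumes K: "1 < K" and valid: "valid_dist K \<mu> D"
  shows "surr_risk K \<mu> D g = (\<integral>\<^sup>+x. ennreal (cond_surr_risk K (D x) (g x)) \<partial>\<mu>)"
  using valid nn_integral_surr_loss[OF K] unfolding surr_risk_def valid_dist_def by simp

lemma surr_risk_const_finite:
  assumes K: "1 < K" and valid: "valid_dist K \<mu> D"
  shows "surr_risk K \<mu> D (\<lambda>x. v) < \<top>"
proof -
  define B where "B = (\<Sum>y=1..K. \<Sum>m=1..K. surr_loss K v y m)"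
  have "cond_surr_risk K (D x) v \<le> B" for x
    unfolding cond_surr_risk_def B_def using surr_loss_nonneg[OF K] pmf_le_1
    by (intro sum_mono mult_left_le_one_le) auto
  then have "surr_risk K \<mu> D (\<lambda>x. v) \<le> (\<integral>\<^sup>+x. ennreal B \<partial>\<mu>)"
    unfolding surr_risk_eq[OF K valid] by (intro nn_integral_mono ennreal_leI)
  also have "\<dots> = ennreal B"
    using valid unfolding valid_dist_def by (simp add: prob_space.emeasure_space_1)
  finally show ?thesis
    using ennreal_less_top[of B] by (rule order_le_less_trans)
qed

lemma exists_halving_score:
  assumes K: "1 < K" and valid: "valid_dist K \<mu> D" and g: "meas_score K \<mu> g"
  obtains h where "meas_score K \<mu> h"
    "\<And>x. surr_regret K (D x) (h x) \<le> surr_regret K (D x) (g x) / 2"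
proof
  let ?q = "\<lambda>x y. (label_prob K (D x) y + asym_softmax K (g x) y) / 2"
  let ?t = "\<lambda>x. (agree_prob K (D x) + asym_softmax K (g x) (K+1)) / 2"
  show "meas_score K \<mu> (\<lambda>x. asym_softmax_inv K (?q x) (?t x))"
    using measurable_pmf_valid_dist[OF valid] measurable_asym_softmax[OF g]
    unfolding label_prob_def agree_prob_def
    by (intro meas_score_asym_softmax_inv borel_measurable_divide borel_measurable_add
        borel_measurable_sum) auto
  show "surr_regret K (D x) (asym_softmax_inv K (?q x) (?t x)) \<le> surr_regret K (D x) (g x) / 2" for x
    using valid unfolding valid_dist_def by (intro surr_regret_halving[OF K]) auto
qed

lemma surr_risk_add_half_regret_le:
  assumes K: "1 < K" and valid: "valid_dist K \<mu> D" and h: "meas_score K \<mu> h"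
    and g: "meas_score K \<mu> g"
    and h_le: "\<And>x. surr_regret K (D x) (h x) \<le> surr_regret K (D x) (g x) / 2"
  shows "surr_risk K \<mu> D h + (\<integral>\<^sup>+x. ennreal (surr_regret K (D x) (g x) / 2) \<partial>\<mu>)
    \<le> surr_risk K \<mu> D g"
proof -
  have supp: "\<And>x. set_pmf (D x) \<subseteq> {1..K} \<times> {1..K}"
    using valid unfolding valid_dist_def by blast
  have "surr_risk K \<mu> D h + (\<integral>\<^sup>+x. ennreal (surr_regret K (D x) (g x) / 2) \<partial>\<mu>)
      = (\<integral>\<^sup>+x. ennreal (cond_surr_risk K (D x) (h x))
          + ennreal (surr_regret K (D x) (g x) / 2) \<partial>\<mu>)"
    unfolding surr_risk_eq[OF K valid]
    using measurable_cond_surr_risk[OF valid h] measurable_surr_regret[OF valid g]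
    by (subst nn_integral_add) auto
  also have "\<dots> \<le> surr_risk K \<mu> D g"
    unfolding surr_risk_eq[OF K valid]
  proof (intro nn_integral_mono)
    fix x
    have "cond_surr_risk K (D x) (h x) + surr_regret K (D x) (g x) / 2 \<le> cond_surr_risk K (D x) (g x)"
      using cond_surr_risk_eq[OF K supp] h_le[of x] by simp
    then show "ennreal (cond_surr_risk K (D x) (h x)) + ennreal (surr_regret K (D x) (g x) / 2)
        \<le> ennreal (cond_surr_risk K (D x) (g x))"
      using cond_surr_risk_nonneg[OF K] surr_regret_nonneg[OF K supp]
      by (simp add: ennreal_plus[symmetric] del: ennreal_plus)
  qed
  finally show ?thesis .
qed

lemma surr_minimizer_AE_regret_eq_0:
  assumes K: "1 < K" and valid: "valid_dist K \<mu> D" and gmin: "surr_minimizer K \<mu> D g"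
  shows "AE x in \<mu>. surr_regret K (D x) (g x) = 0"
proof -
  have supp: "\<And>x. set_pmf (D x) \<subseteq> {1..K} \<times> {1..K}"
    using valid unfolding valid_dist_def by blast
  have g: "meas_score K \<mu> g"
    and g_le: "\<And>h. meas_score K \<mu> h \<Longrightarrow> surr_risk K \<mu> D g \<le> surr_risk K \<mu> D h"
    using gmin unfolding surr_minimizer_def by blast+
  obtain h where h: "meas_score K \<mu> h"
    and h_le: "\<And>x. surr_regret K (D x) (h x) \<le> surr_regret K (D x) (g x) / 2"
    using exists_halving_score[OF K valid g] by blast
  let ?R = "\<lambda>x. ennreal (surr_regret K (D x) (g x) / 2)"
  note improve = surr_risk_add_half_regret_le[OF K valid h g h_le]
  have "surr_risk K \<mu> D g < \<top>"
    using g_le[of "\<lambda>x. \<lambda>i. 0"] surr_risk_const_finite[OF K valid, of "\<lambda>i. 0"]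
    by (simp add: meas_score_def)
  moreover have "surr_risk K \<mu> D h \<le> surr_risk K \<mu> D g"
    using improve by (rule order_trans[rotated]) simp
  ultimately have "surr_risk K \<mu> D h \<noteq> \<top>"
    by auto
  moreover have "surr_risk K \<mu> D h + (\<integral>\<^sup>+x. ?R x \<partial>\<mu>) \<le> surr_risk K \<mu> D h + 0"
    using g_le[OF h] by (intro order_trans[OF improve]) simp
  ultimately have "(\<integral>\<^sup>+x. ?R x \<partial>\<mu>) = 0"
    by (simp add: ennreal_add_left_cancel_le)
  then have "AE x in \<mu>. ?R x = 0"
    using measurable_surr_regret[OF valid g] by (simp add: nn_integral_0_iff_AE)
  then show ?thesis
  proof (rule AE_mp, intro AE_I2 impI)
    fix x
    assume "?R x = 0"
    then have "surr_regret K (D x) (g x) \<le> 0"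
      by (simp add: ennreal_eq_0_iff)
    then show "surr_regret K (D x) (g x) = 0"
      using surr_regret_nonneg[OF K supp, of x "g x"] by linarith
  qed
qed

lemma surr_minimizer_AE_asym_softmax_eq_target:
  assumes K: "1 < K" and valid: "valid_dist K \<mu> D" and gmin: "surr_minimizer K \<mu> D g"
  shows "AE x in \<mu>. \<forall>i\<in>{1..K+1}. asym_softmax K (g x) i = target K D x i"
  using surr_minimizer_AE_regret_eq_0[OF K valid gmin]
proof eventually_elim
  case (elim x)
  have supp: "set_pmf (D x) \<subseteq> {1..K} \<times> {1..K}"
    using valid unfolding valid_dist_def by blast
  have "{1..K+1} = insert (K+1) {1..K}"
    by auto
  then show ?case
    using elim surr_regret_eq_0_iff[OF K supp] target_eq_label_prob[of D x K, OF supp]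
      target_last_eq_agree_prob[of D x K, OF supp] by auto
qed

lemma nn_integral_indicator_compl_pmf:
  "(\<integral>\<^sup>+z. indicator (- A) z \<partial>measure_pmf \<pi>) = ennreal (1 - measure_pmf.prob \<pi> A)"
  using measure_pmf.prob_compl[of A \<pi>]
  by (simp add: measure_pmf.emeasure_eq_measure Compl_eq_Diff_UNIV)

lemma nn_integral_loss01_defer:
  assumes "d \<in> insert None (Some ` {1..K})"
  shows "(\<integral>\<^sup>+z. ennreal (loss01_defer d (fst z) (snd z)) \<partial>measure_pmf (D x))
    = ennreal (1 - target K D x (decision_index K d))"
proof -
  define E where "E = (case d of None \<Rightarrow> {(y, m). m = y} | Some y0 \<Rightarrow> {(y, m). y = y0})"
  have "(\<lambda>z. ennreal (loss01_defer d (fst z) (snd z))) = indicator (- E)"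
    by (auto simp: fun_eq_iff E_def loss01_defer_def split: option.split split_indicator)
  moreover have "target K D x (decision_index K d) = measure_pmf.prob (D x) E"
    using assms by (auto simp: target_def decision_index_def E_def)
  ultimately show ?thesis
    by (simp add: nn_integral_indicator_compl_pmf)
qed

lemma risk01_defer_decision_le:
  assumes K: "1 < K" and valid: "valid_dist K \<mu> D" and gmin: "surr_minimizer K \<mu> D g"
    and f: "\<forall>x\<in>space \<mu>. f x \<in> insert None (Some ` {1..K})"
  shows "risk01 \<mu> D (\<lambda>x. defer_decision K (g x)) \<le> risk01 \<mu> D f"
  unfolding risk01_def
proof (rule nn_integral_mono_AE)
  show "AE x in \<mu>.
      (\<integral>\<^sup>+z. ennreal (loss01_defer (defer_decision K (g x)) (fst z) (snd z)) \<partial>measure_pmf (D x))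
      \<le> (\<integral>\<^sup>+z. ennreal (loss01_defer (f x) (fst z) (snd z)) \<partial>measure_pmf (D x))"
    using surr_minimizer_AE_asym_softmax_eq_target[OF K valid gmin] AE_space
  proof eventually_elim
    case (elim x)
    let ?\<phi> = "defer_decision K (g x)"
    have admissible: "f x \<in> insert None (Some ` {1..K})" "?\<phi> \<in> insert None (Some ` {1..K})"
      using f elim defer_decision_range[of K "g x"] K by auto
    then have "decision_index K (f x) \<in> {1..K+1}" "decision_index K ?\<phi> \<in> {1..K+1}"
      by (auto simp: decision_index_def)
    then have "target K D x (decision_index K (f x)) \<le> target K D x (decision_index K ?\<phi>)"
      using elim defer_decision_maximizes[OF K admissible(1), of "g x"] by simp
    then show ?case
      by (simp add: nn_integral_loss01_defer[OF admissible(1)] nn_integral_loss01_defer[OF admissible(2)]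
          ennreal_leI)
  qed
qed

section \<open>Probability estimators\<close>

lemma surr_minimizer_of_regret_zero:
  assumes K: "1 < K" and valid: "valid_dist K \<mu> D" and g: "meas_score K \<mu> g"
    and regret: "\<And>x. surr_regret K (D x) (g x) = 0"
  shows "surr_minimizer K \<mu> D g"
  unfolding surr_minimizer_def
proof (intro conjI allI impI g)
  fix h
  have supp: "\<And>x. set_pmf (D x) \<subseteq> {1..K} \<times> {1..K}"
    using valid unfolding valid_dist_def by blast
  have "cond_surr_risk K (D x) (g x) \<le> cond_surr_risk K (D x) (h x)" for x
    using cond_surr_risk_eq[OF K supp] regret surr_regret_nonneg[OF K supp] by simp
  then show "surr_risk K \<mu> D g \<le> surr_risk K \<mu> D h"
    unfolding surr_risk_eq[OF K valid] by (intro nn_integral_mono ennreal_leI)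
qed

lemma exists_pmf_with_label_agree_prob:
  assumes K: "1 < K" and q: "\<And>y. y \<in> {1..K} \<Longrightarrow> 0 \<le> q y" "(\<Sum>y=1..K. q y) = 1"
    and t: "0 \<le> t" "t \<le> 1"
  obtains \<pi> where "set_pmf \<pi> \<subseteq> {1..K} \<times> {1..K}"
    "\<forall>y\<in>{1..K}. label_prob K \<pi> y = q y" "agree_prob K \<pi> = t"
proof -
  define other :: "nat \<Rightarrow> nat" where "other y = (if y = 1 then 2 else 1)" for y
  have other: "other y \<in> {1..K}" "y \<noteq> other y" for y
    using K by (auto simp: other_def)
  define w where "w z = (if fst z \<in> {1..K} then
      q (fst z) * ((if snd z = fst z then t else 0) + (if snd z = other (fst z) then 1 - t else 0))
    else 0)" for z
  have w_nonneg: "0 \<le> w z" for z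
    using q(1) t by (auto simp: w_def)
  have w_label: "(\<Sum>m=1..K. w (y, m)) = q y" if "y \<in> {1..K}" for y
    using that other[of y] by (simp add: w_def sum.distrib sum_distrib_left[symmetric])
  have "(\<integral>\<^sup>+z. ennreal (w z) \<partial>count_space UNIV) = (\<Sum>z\<in>{1..K} \<times> {1..K}. ennreal (w z))"
    using other by (intro nn_integral_count_space') (auto simp: w_def)
  also have "\<dots> = ennreal (\<Sum>y=1..K. \<Sum>m=1..K. w (y, m))"
    using w_nonneg by (simp add: sum_ennreal sum.cartesian_product)
  also have "(\<Sum>y=1..K. \<Sum>m=1..K. w (y, m)) = (\<Sum>y=1..K. q y)"
    using w_label by (intro sum.cong) auto
  also have "\<dots> = 1"
    by (fact q(2))
  finally have pmf_w: "pmf (embed_pmf w) z = w z" for z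
    using w_nonneg by (intro pmf_embed_pmf) auto
  show thesis
  proof
    show "set_pmf (embed_pmf w) \<subseteq> {1..K} \<times> {1..K}"
      using other by (auto simp: set_pmf_eq pmf_w w_def split: if_splits)
    show "\<forall>y\<in>{1..K}. label_prob K (embed_pmf w) y = q y"
      using w_label by (simp add: label_prob_def pmf_w)
    have "agree_prob K (embed_pmf w) = (\<Sum>y=1..K. q y * t)"
      unfolding agree_prob_def pmf_w using other by (intro sum.cong refl) (simp add: w_def)
    then show "agree_prob K (embed_pmf w) = t"
      using q(2) by (simp add: sum_distrib_right[symmetric])
  qed
qed

lemma prob_estimator_eq_asym_softmax:
  assumes K: "1 < K" and \<mu>: "prob_space \<mu>" and est: "prob_estimator K \<mu> est"
    and i: "i \<in> {1..K+1}"
  shows "est u i = asym_softmax K u i"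
proof -
  obtain \<pi> where supp: "set_pmf \<pi> \<subseteq> {1..K} \<times> {1..K}"
    and \<pi>: "\<forall>y\<in>{1..K}. label_prob K \<pi> y = asym_softmax K u y"
      "agree_prob K \<pi> = asym_softmax K u (K+1)"
    using exists_pmf_with_label_agree_prob[OF K less_imp_le[OF asym_softmax_pos] asym_softmax_sum
        less_imp_le[OF asym_softmax_last_pos_less_1(1)[OF K]]
        less_imp_le[OF asym_softmax_last_pos_less_1(2)[OF K]]] K
    by auto
  let ?D = "\<lambda>x. \<pi>"
  have valid: "valid_dist K \<mu> ?D"
    using \<mu> supp by (simp add: valid_dist_def)
  have gmin: "surr_minimizer K \<mu> ?D (\<lambda>x. u)"
    using \<pi> surr_regret_eq_0_iff[OF K supp, of u]
    by (intro surr_minimizer_of_regret_zero[OF K valid]) (auto simp: meas_score_def)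
  have "AE x in \<mu>. est u i = target K ?D x i"
    using est valid gmin i unfolding prob_estimator_def by fastforce
  moreover have "AE x in \<mu>. \<forall>j\<in>{1..K+1}. asym_softmax K u j = target K ?D x j"
    by (rule surr_minimizer_AE_asym_softmax_eq_target[OF K valid gmin])
  ultimately have "AE x in \<mu>. est u i = asym_softmax K u i"
    by eventually_elim (use i in simp)
  then show ?thesis
    using prob_space.AE_const[OF \<mu>] by simp
qed

theorem theorem2:
  fixes K :: nat and \<mu> :: "'x measure" and D :: "'x \<Rightarrow> (nat \<times> nat) pmf"
  assumes "K > 1" and "valid_dist K \<mu> D"
  shows "(\<forall>g. surr_minimizer K \<mu> D g \<longrightarrow>
            (\<forall>f. f \<in> measurable \<mu> (count_space UNIV)
                 \<and> (\<forall>x\<in>space \<mu>. f x \<in> insert None (Some ` {1..K})) \<longrightarrow>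
                 risk01 \<mu> D (\<lambda>x. defer_decision K (g x)) \<le> risk01 \<mu> D f))
       \<and> (\<forall>g. surr_minimizer K \<mu> D g \<longrightarrow>
            (AE x in \<mu>. \<forall>i\<in>{1..K+1}. asym_softmax K (g x) i = target K D x i))
       \<and> (\<forall>est. prob_estimator K \<mu> est \<longrightarrow> (\<exists>B. \<forall>u. \<forall>i\<in>{1..K+1}. \<bar>est u i\<bar> \<le> B))"
proof -
  note K = assms(1) and valid = assms(2)
  have \<mu>: "prob_space \<mu>"
    using valid unfolding valid_dist_def by blast
  have "\<bar>est u i\<bar> \<le> 1" if "prob_estimator K \<mu> est" "i \<in> {1..K+1}" for est u i
    using prob_estimator_eq_asym_softmax[OF K \<mu> that] asym_softmax_abs_le_1[OF K that(2)] by simp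
  then show ?thesis
    using risk01_defer_decision_le[OF K valid] surr_minimizer_AE_asym_softmax_eq_target[OF K valid]
    by blast
qed

end
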